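(* Let $w$ be a planar word in $\Sigma_{0,1,n}$ and let $k\in\{1,\dots,n\}$. Then: (i) $w$ is squarefree, i.e. its reduced word has no two consecutive equal letters; (ii) $w\notin(\overline t_n\overline t_{n-1}\cdots\overline t_{k+1}t_k{\star})\setminus\{(t_{k+1}\cdots t_n)^{-1}t_k(t_{k+1}\cdots t_n)\}$; (iii) $w\notin(t_1t_2\cdots t_{k-1}\overline t_k{\star})$.
   Context: $\Sigma_{0,1,n}$ is the free group on $t_1,\dots,t_n$; write $\overline t_k=t_k^{-1}$. For $v\in\Sigma_{0,1,n}$, $(v{\star})$ is the set of elements whose reduced word begins with the reduced word of $v$. Empty products equal $1$. Let $A$ be the set of formal symbols $\overline z_1,t_1,\overline t_1,\dots,t_n,\overline t_n,z_1$, totally ordered by $\overline z_1<t_1<\overline t_1<\dots<t_n<\overline t_n<z_1$. For a reduced word $a_1\cdots a_m$ (with $a_i\in\{t_k^{\pm1}\}$), its Whitehead expansion is $(c_1,\dots,c_{2m+2})=(\overline z_1,a_1,\overline a_1,\dots,a_m,\overline a_m,z_1)$. Two $2$-element sets $\{a,b\},\{c,d\}$ of integers are nested if $a,b,c,d$ are distinct and either both or neither of $c,d$ lie strictly between $a$ and $b$. A family of such sets is nested if every two distinct members are nested. A $2M$-tuple $(c_1,\dots,c_{2M})$ of elements of $A$ is planar if there is a permutation $\pi$ of $\{1,\dots,2M\}$ with three properties: - $\pi(i)<\pi(j)$ implies $c_i\le c_j$; - the family $\{\{\pi(2i-1),\pi(2i)\}\}_{1\le i\le M}$ is nested; - the family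 $\{\{\pi(2i),\pi(2i+1)\}\}_{1\le i\le M-1}$ is nested. $w$ is a planar word if the Whitehead expansion of its reduced word is planar. *)

theory Defs
  imports Main
begin

text \<open>Letters of the free group on t_1..t_n: (k, True) is t_k, (k, False) is its inverse.
 Elements of the free group are represented by their (unique) reduced words.\<close>

type_synonym letter = "nat \<times> bool"

definition inv_letter :: "letter \<Rightarrow> letter" where
  "inv_letter a = (fst a, \<not> snd a)"

definition reduced :: "letter list \<Rightarrow> bool" where
  "reduced w \<longleftrightarrow> (\<forall>i. Suc i < length w \<longrightarrow> w ! Suc i \<noteq> inv_letter (w ! i))"

definition word_in :: "nat \<Rightarrow> letter list \<Rightarrow> bool" where
  "word_in n w \<longleftrightarrow> (\<forall>a\<in>set w. 1 \<le> fst a \<and> fst a \<le> n)"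

definition free_word :: "nat \<Rightarrow> letter list \<Rightarrow> bool" where
  "free_word n w \<longleftrightarrow> word_in n w \<and> reduced w"

definition tt :: "nat \<Rightarrow> letter" where "tt k = (k, True)"
definition tbar :: "nat \<Rightarrow> letter" where "tbar k = (k, False)"

datatype sym = Zbar | Tl letter | Z

text \<open>Rank realising the total order zbar_1 < t_1 < tbar_1 < ... < t_n < tbar_n < z_1.\<close>
fun sym_rank :: "nat \<Rightarrow> sym \<Rightarrow> nat" where
  "sym_rank n Zbar = 0"
| "sym_rank n (Tl (k, b)) = (if b then 2*k - 1 else 2*k)"
| "sym_rank n Z = 2*n + 1"

definition sym_le :: "nat \<Rightarrow> sym \<Rightarrow> sym \<Rightarrow> bool" where
  "sym_le n x y \<longleftrightarrow> sym_rank n x \<le> sym_rank n y"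

definition whitehead :: "letter list \<Rightarrow> sym list" where
  "whitehead w = Zbar # concat (map (\<lambda>a. [Tl a, Tl (inv_letter a)]) w) @ [Z]"

definition strictly_between :: "int \<Rightarrow> int \<Rightarrow> int \<Rightarrow> bool" where
  "strictly_between a b x \<longleftrightarrow> min a b < x \<and> x < max a b"

definition nested_pair :: "int \<times> int \<Rightarrow> int \<times> int \<Rightarrow> bool" where
  "nested_pair p q \<longleftrightarrow> (let (a, b) = p; (c, d) = q in
     distinct [a, b, c, d] \<and>
     (strictly_between a b c \<longleftrightarrow> strictly_between a b d))"

definition nested_family :: "nat set \<Rightarrow> (nat \<Rightarrow> int \<times> int) \<Rightarrow> bool" where
  "nested_family I F \<longleftrightarrow>
     (\<forall>i\<in>I. \<forall>j\<in>I. {fst (F i), snd (F i)} \<noteq> {fst (F j), snd (F j)} \<longrightarrow> nested_pair (F i) (F j))"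

text \<open>Planarity of a 2M-tuple c (given as a list, c_i = c ! (i-1)).\<close>
definition planar_tuple :: "nat \<Rightarrow> sym list \<Rightarrow> bool" where
  "planar_tuple n c \<longleftrightarrow> (\<exists>M. length c = 2*M \<and> (\<exists>\<pi> :: nat \<Rightarrow> nat.
     bij_betw \<pi> {1..2*M} {1..2*M} \<and>
     (\<forall>i\<in>{1..2*M}. \<forall>j\<in>{1..2*M}. \<pi> i < \<pi> j \<longrightarrow> sym_le n (c ! (i - 1)) (c ! (j - 1))) \<and>
     nested_family {1..M} (\<lambda>i. (int (\<pi> (2*i - 1)), int (\<pi> (2*i)))) \<and>
     nested_family {1..M-1} (\<lambda>i. (int (\<pi> (2*i)), int (\<pi> (2*i + 1))))))"

definition planar_word :: "nat \<Rightarrow> letter list \<Rightarrow> bool" where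
  "planar_word n w \<longleftrightarrow> planar_tuple n (whitehead w)"

definition squarefree_word :: "letter list \<Rightarrow> bool" where
  "squarefree_word w \<longleftrightarrow> (\<forall>i. Suc i < length w \<longrightarrow> w ! i \<noteq> w ! Suc i)"

text \<open>(v*) for reduced v: reduced words starting with v.\<close>
definition starts_with :: "letter list \<Rightarrow> letter list \<Rightarrow> bool" where
  "starts_with v w \<longleftrightarrow> (\<exists>u. w = v @ u)"

end

theory Submission
  imports Defs
begin

(* Planarity of w = a_1 ... a_m provides a placement of the Whitehead expansion
   (zbar, a_1, abar_1, ..., a_m, abar_m, z) on a line, monotone in the rank order of the symbols,
   for which the "upper" arcs {abar_(i-1), a_i} and the "lower" arcs {a_i, abar_i} are nested.  All
   three parts are proved by the same mechanism: if one endpoint of an upper arc lies inside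
   another upper arc, so does the other endpoint, whose rank is then squeezed between the ranks
   of the enclosing arc; together with reducedness this pins down the next letter of w.
   (i) follows by infinite descent on the length of lower arcs, (iii) by a downward induction
   producing the letters tbar_(k-1), tbar_(k-2), ..., and (ii) by an upward induction producing
   t_(k+1), ..., t_n, followed by the observation that the word must stop there. *)

(* Indexing the Whitehead expansion (zbar, a_1, abar_1, ..., a_m, abar_m, z): as a 0-based list
   it has zbar at 0, a_(i+1) at 2i+1, abar_(i+1) at 2i+2 and z at 2m+1. *)
lemma length_concat_pairs: "length (concat (map (\<lambda>a. [f a, g a]) xs)) = 2 * length xs"
  by (induction xs) auto

lemma nth_concat_pairs_even:
  "i < length xs \<Longrightarrow> concat (map (\<lambda>a. [f a, g a]) xs) ! (2 * i) = f (xs ! i)"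
  by (induction xs arbitrary: i) (auto simp: nth_Cons split: nat.splits)

lemma nth_concat_pairs_odd:
  "i < length xs \<Longrightarrow> concat (map (\<lambda>a. [f a, g a]) xs) ! Suc (2 * i) = g (xs ! i)"
  by (induction xs arbitrary: i) (auto simp: nth_Cons split: nat.splits)

lemma length_whitehead: "length (whitehead w) = 2 * Suc (length w)"
  by (simp add: whitehead_def length_concat_pairs)

lemma whitehead_first: "whitehead w ! 0 = Zbar"
  by (simp add: whitehead_def)

lemma whitehead_letter: "i < length w \<Longrightarrow> whitehead w ! Suc (2 * i) = Tl (w ! i)"
  by (simp add: whitehead_def nth_append length_concat_pairs nth_concat_pairs_even)

lemma whitehead_inverse:
  "i < length w \<Longrightarrow> whitehead w ! Suc (Suc (2 * i)) = Tl (inv_letter (w ! i))"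
  by (simp add: whitehead_def nth_append length_concat_pairs nth_concat_pairs_odd)

lemma whitehead_last: "whitehead w ! Suc (2 * length w) = Z"
  by (simp add: whitehead_def nth_append length_concat_pairs)

(* Positions of letters and of inverse letters in the expansion have different parity. *)
declare Suc_double_not_eq_double [simp] double_not_eq_Suc_double [simp]

fun letter_rank :: "letter \<Rightarrow> nat" where
  "letter_rank (k, b) = (if b then 2 * k - 1 else 2 * k)"

lemma sym_rank_letter [simp]: "sym_rank n (Tl a) = letter_rank a"
  by (cases a) simp

lemma inv_letter_pair [simp]: "inv_letter (k, b) = (k, \<not> b)"
  by (simp add: inv_letter_def)

lemma inv_letter_inv_letter [simp]: "inv_letter (inv_letter a) = a"
  by (simp add: inv_letter_def)

lemma fst_inv_letter [simp]: "fst (inv_letter a) = fst a"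
  by (simp add: inv_letter_def)

(* The letters of rank between those of a and its inverse are just a and abar; so a letter in
   that window which is not abar (the reduced-word condition) must be a itself. *)
lemma letter_in_block:
  assumes "1 \<le> fst a" "1 \<le> fst b" "b \<noteq> inv_letter a"
    and "min (letter_rank a) (letter_rank (inv_letter a)) \<le> letter_rank b"
    and "letter_rank b \<le> max (letter_rank a) (letter_rank (inv_letter a))"
  shows "b = a"
  using assms by (cases a; cases b) (auto split: if_splits)

lemma letter_after_t:
  assumes "1 \<le> fst b" "b \<noteq> (j, True)" "b \<noteq> (j, False)"
    and "2 * j - 1 \<le> letter_rank b" "letter_rank b \<le> 2 * j + 1"
  shows "b = (Suc j, True)"
  using assms by (cases b) (auto split: if_splits)

lemma letter_after_tbar:
  assumes "1 \<le> fst b" "b \<noteq> (Suc j, True)" "b \<noteq> (Suc j, False)"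
    and "2 * j \<le> letter_rank b" "letter_rank b \<le> 2 * j + 2"
  shows "b = (j, False) \<and> 1 \<le> j"
  using assms by (cases b) (auto split: if_splits)

lemma letter_near_top:
  assumes "1 \<le> fst b" "fst b \<le> n" "b \<noteq> (n, True)" "b \<noteq> (n, False)"
    and "2 * n - 1 \<le> letter_rank b"
  shows False
  using assms by (cases b) (auto split: if_splits)

definition in_arc :: "nat \<Rightarrow> nat \<Rightarrow> nat \<Rightarrow> bool" where
  "in_arc x y z \<longleftrightarrow> min x y < z \<and> z < max x y"

lemma in_arc_commute: "in_arc x y z \<longleftrightarrow> in_arc y x z"
  by (auto simp: in_arc_def)

lemma strictly_between_nat: "strictly_between (int x) (int y) (int z) = in_arc x y z"
  by (auto simp: strictly_between_def in_arc_def min_def max_def)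

lemma in_arc_span_less:
  "in_arc x y x' \<Longrightarrow> in_arc x y y' \<Longrightarrow> max x' y' - min x' y' < max x y - min x y"
  by (auto simp: in_arc_def min_def max_def)

(* The boolean s records an orientation shared by several arcs, so
   each fact covers a configuration together with its mirror image. *)
lemma nested_arc_crosses:
  "in_arc x y x' \<Longrightarrow> in_arc x y y' \<Longrightarrow> (x < y \<longleftrightarrow> s) \<Longrightarrow> (x' < y' \<longleftrightarrow> s)
    \<Longrightarrow> distinct [x, y, x', y'] \<Longrightarrow> in_arc y x' y'"
  by (cases s) (auto simp: in_arc_def)

lemma cooriented_shift_forward:
  "in_arc y x' z \<Longrightarrow> (x' < y \<longleftrightarrow> s) \<Longrightarrow> (x' < y' \<longleftrightarrow> s) \<Longrightarrow> (z < y' \<longleftrightarrow> s)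
    \<Longrightarrow> distinct [y, x', z, y'] \<Longrightarrow> in_arc x' y' z"
  by (cases s) (auto simp: in_arc_def)

lemma outside_arc_encloses:
  "\<not> in_arc x y x' \<Longrightarrow> \<not> in_arc x y y' \<Longrightarrow> (x < y \<longleftrightarrow> s) \<Longrightarrow> (x' < y \<longleftrightarrow> s)
    \<Longrightarrow> (x < y' \<longleftrightarrow> s) \<Longrightarrow> (x' < y' \<longleftrightarrow> s) \<Longrightarrow> distinct [x, y, x', y']
    \<Longrightarrow> in_arc x' y' x \<and> in_arc x' y' y \<and> in_arc y x' x"
  by (cases s) (auto simp: in_arc_def)

lemma cooriented_shift_backward:
  "in_arc y x' z \<Longrightarrow> (x < z \<longleftrightarrow> s) \<Longrightarrow> (x < y \<longleftrightarrow> s) \<Longrightarrow> (x' < y \<longleftrightarrow> s)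
    \<Longrightarrow> distinct [x, y, x', z] \<Longrightarrow> in_arc x y z"
  by (cases s) (auto simp: in_arc_def)

lemma nth_tbar_run:
  "x < n - k \<Longrightarrow> (map tbar (rev [k+1..<n+1]) @ ys) ! x = (n - x, False)"
  by (simp add: nth_append rev_nth tbar_def del: upt_Suc)

lemma nth_tbar_run_centre:
  "k \<le> n \<Longrightarrow> (map tbar (rev [k+1..<n+1]) @ [tt k] @ ys) ! (n - k) = (k, True)"
  by (simp add: nth_append tt_def del: upt_Suc)

lemma nth_tbar_t_word:
  assumes "k \<le> n" "t \<le> n - k"
  shows "(map tbar (rev [k+1..<n+1]) @ [tt k] @ map tt [k+1..<n+1]) ! (n - k + t) = (k + t, True)"
proof -
  have run: "length (map tbar (rev [k+1..<n+1])) = n - k" by (simp del: upt_Suc)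
  have "[tt k] @ map tt [k+1..<n+1] = map tt [k..<n+1]"
    using assms by (simp add: upt_conv_Cons del: upt_Suc)
  moreover have "map tt [k..<n+1] ! t = (k + t, True)"
    using assms by (simp add: tt_def del: upt_Suc)
  ultimately show ?thesis using nth_append_length_plus[of "map tbar (rev [k+1..<n+1])"]
    unfolding run by simp
qed

lemma nth_t_run: "i < k - 1 \<Longrightarrow> (map tt [1..<k] @ ys) ! i = (Suc i, True)"
  by (simp add: nth_append tt_def del: upt_Suc)

lemma nth_t_run_end: "1 \<le> k \<Longrightarrow> (map tt [1..<k] @ [tbar k] @ ys) ! (k - 1) = (k, False)"
  by (simp add: nth_append tbar_def del: upt_Suc)

(* A planar diagram for a reduced word w of length m: p places the 2(m+1) entries of the
   Whitehead expansion on a line, monotonically in their rank, such that the upper arcs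
   {abar_(i-1), a_i} (1 <= i <= m+1, with abar_0 = zbar and a_(m+1) = z) are pairwise nested and
   so are the lower arcs {a_i, abar_i} (1 <= i <= m).  In the notation below a_i sits at X i and
   abar_i at Y i. *)
locale planar_diagram =
  fixes n :: nat and w :: "letter list" and p :: "nat \<Rightarrow> nat"
  assumes free: "free_word n w"
    and perm: "bij_betw p {1..2 * Suc (length w)} {1..2 * Suc (length w)}"
    and order: "\<forall>i\<in>{1..2 * Suc (length w)}. \<forall>j\<in>{1..2 * Suc (length w)}.
                  p i < p j \<longrightarrow> sym_le n (whitehead w ! (i - 1)) (whitehead w ! (j - 1))"
    and upper: "nested_family {1..Suc (length w)} (\<lambda>i. (int (p (2 * i - 1)), int (p (2 * i))))"
    and lower: "nested_family {1..length w} (\<lambda>i. (int (p (2 * i)), int (p (2 * i + 1))))"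
begin

abbreviation m :: nat where "m \<equiv> length w"
abbreviation positions :: "nat set" where "positions \<equiv> {1..2 * Suc m}"
abbreviation X :: "nat \<Rightarrow> nat" where "X i \<equiv> p (2 * i)"
abbreviation Y :: "nat \<Rightarrow> nat" where "Y i \<equiv> p (Suc (2 * i))"

definition rk :: "nat \<Rightarrow> nat" where
  "rk a = sym_rank n (whitehead w ! (a - 1))"

lemma rank_X: "1 \<le> i \<Longrightarrow> i \<le> m \<Longrightarrow> rk (2 * i) = letter_rank (w ! (i - 1))"
  using whitehead_letter[of "i - 1" w] by (cases i) (simp_all add: rk_def)

lemma rank_Y: "1 \<le> i \<Longrightarrow> i \<le> m \<Longrightarrow> rk (Suc (2 * i)) = letter_rank (inv_letter (w ! (i - 1)))"
  using whitehead_inverse[of "i - 1" w] by (cases i) (simp_all add: rk_def)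

lemma rank_Y_first: "rk (Suc 0) = 0"
  by (simp add: rk_def whitehead_first)

lemma rank_X_last: "rk (2 * Suc m) = 2 * n + 1"
  using whitehead_last[of w] by (simp add: rk_def)

lemma rank_le_if_pos_less: "a \<in> positions \<Longrightarrow> b \<in> positions \<Longrightarrow> p a < p b \<Longrightarrow> rk a \<le> rk b"
  using order by (auto simp: sym_le_def rk_def)

lemma pos_less_if_rank_less: "a \<in> positions \<Longrightarrow> b \<in> positions \<Longrightarrow> rk a < rk b \<Longrightarrow> p a < p b"
proof -
  assume ab: "a \<in> positions" "b \<in> positions" "rk a < rk b"
  then have "p a \<noteq> p b"
    using perm unfolding bij_betw_def inj_on_def by (metis less_irrefl)
  moreover have "\<not> p b < p a"
    using ab rank_le_if_pos_less[of b a] by auto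
  ultimately show ?thesis by simp
qed

lemma pos_less_iff_rank_less:
  "a \<in> positions \<Longrightarrow> b \<in> positions \<Longrightarrow> rk a \<noteq> rk b \<Longrightarrow> p a < p b \<longleftrightarrow> rk a < rk b"
  using pos_less_if_rank_less rank_le_if_pos_less by (metis linorder_neqE_nat not_le)

lemma rank_in_arc:
  assumes "a \<in> positions" "b \<in> positions" "c \<in> positions" "in_arc (p a) (p b) (p c)"
  shows "min (rk a) (rk b) \<le> rk c \<and> rk c \<le> max (rk a) (rk b)"
proof (cases "p a < p b")
  case True
  then have "rk a \<le> rk c" "rk c \<le> rk b"
    using assms rank_le_if_pos_less[of a c] rank_le_if_pos_less[of c b] by (auto simp: in_arc_def)
  then show ?thesis by simp
next
  case False
  then have "rk b \<le> rk c" "rk c \<le> rk a"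
    using assms rank_le_if_pos_less[of b c] rank_le_if_pos_less[of c a] by (auto simp: in_arc_def)
  then show ?thesis by simp
qed

lemma pos_eq_iff [simp]: "a \<in> positions \<Longrightarrow> b \<in> positions \<Longrightarrow> p a = p b \<longleftrightarrow> a = b"
  using perm unfolding bij_betw_def by (auto simp: inj_on_eq_iff)

lemma upper_nested:
  assumes "i \<le> m" "i' \<le> m" "i \<noteq> i'"
  shows "in_arc (Y i) (X (Suc i)) (Y i') \<longleftrightarrow> in_arc (Y i) (X (Suc i)) (X (Suc i'))"
proof -
  define F where "F i = (int (p (2 * i - 1)), int (p (2 * i)))" for i
  have F: "F (Suc i) = (int (Y i), int (X (Suc i)))" "F (Suc i') = (int (Y i'), int (X (Suc i')))"
    by (simp_all add: F_def)
  have "Y i \<noteq> Y i'" "Y i \<noteq> X (Suc i')"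
    using assms Suc_double_not_eq_double by auto
  then have "{fst (F (Suc i)), snd (F (Suc i))} \<noteq> {fst (F (Suc i')), snd (F (Suc i'))}"
    unfolding F by (auto simp: doubleton_eq_iff)
  moreover have "Suc i \<in> {1..Suc m}" "Suc i' \<in> {1..Suc m}" using assms by auto
  ultimately have "nested_pair (F (Suc i)) (F (Suc i'))"
    using upper unfolding nested_family_def F_def by blast
  then show ?thesis unfolding F by (simp add: nested_pair_def strictly_between_nat)
qed

lemma lower_nested:
  assumes "1 \<le> i" "i \<le> m" "1 \<le> i'" "i' \<le> m" "i \<noteq> i'"
  shows "in_arc (X i) (Y i) (X i') \<longleftrightarrow> in_arc (X i) (Y i) (Y i')"
proof -
  have "{int (X i), int (Y i)} \<noteq> {int (X i'), int (Y i')}"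
    using assms by (auto simp: doubleton_eq_iff)
  then have "nested_pair (int (X i), int (Y i)) (int (X i'), int (Y i'))"
    using lower assms unfolding nested_family_def by auto
  then show ?thesis by (simp add: nested_pair_def strictly_between_nat)
qed

lemma letter_index: "i < m \<Longrightarrow> 1 \<le> fst (w ! i) \<and> fst (w ! i) \<le> n"
  using free nth_mem unfolding free_word_def word_in_def by blast

lemma reduced_at: "1 \<le> i \<Longrightarrow> i < m \<Longrightarrow> w ! i \<noteq> inv_letter (w ! (i - 1))"
  using free unfolding free_word_def reduced_def
  by (metis Suc_diff_1 less_le_trans zero_less_one)

lemma letter_side:
  assumes "1 \<le> i" "i \<le> m" "1 \<le> i'" "i' \<le> m" "w ! (i' - 1) = w ! (i - 1)"
  shows "X i < Y i' \<longleftrightarrow> letter_rank (w ! (i - 1)) < letter_rank (inv_letter (w ! (i - 1)))"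
proof -
  obtain k b where kb: "w ! (i - 1) = (k, b)" by fastforce
  have "rk (2 * i) = letter_rank (k, b)" "rk (Suc (2 * i')) = letter_rank (k, \<not> b)"
    using assms kb rank_X rank_Y by auto
  moreover have "1 \<le> k" using letter_index[of "i - 1"] assms kb by simp
  ultimately show ?thesis
    using assms kb pos_less_iff_rank_less[of "2 * i" "Suc (2 * i')"] by auto
qed

(* Given a square, the lower arcs i and i+1 are
   nested.  If arc i+1 is inside arc i, the upper arc {abar_i, a_(i+1)} traps a_(i+2) inside the
   rank block of a_i, forcing a_(i+2) = a_i and a strictly smaller nested lower arc; otherwise
   the symmetric argument gives a_(i-1) = a_i.  This infinite descent on arc lengths shows that
   no square exists. *)
definition square_at :: "nat \<Rightarrow> bool" where
  "square_at i \<longleftrightarrow> 1 \<le> i \<and> i < m \<and> w ! i = w ! (i - 1)"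

definition span :: "nat \<Rightarrow> nat" where
  "span i = max (X i) (Y i) - min (X i) (Y i)"

lemma span_less: "in_arc (X i) (Y i) (X i') \<Longrightarrow> in_arc (X i) (Y i) (Y i') \<Longrightarrow> span i' < span i"
  unfolding span_def by (rule in_arc_span_less)

lemma square_inner:
  assumes sq: "square_at i" and inner: "in_arc (X i) (Y i) (X (Suc i))"
  shows "square_at (Suc i) \<and> span (Suc (Suc i)) < span (Suc i) \<and> span (Suc i) < span i"
proof -
  have i: "1 \<le> i" "i < m" using sq by (auto simp: square_at_def)
  obtain a where a: "w ! (i - 1) = a" "w ! i = a" using sq by (auto simp: square_at_def)
  define s where "s \<longleftrightarrow> letter_rank a < letter_rank (inv_letter a)"
  have a_index: "1 \<le> fst a" "fst a \<le> n" using letter_index[of i] i a by auto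
  have side: "X i < Y i \<longleftrightarrow> s" "X (Suc i) < Y i \<longleftrightarrow> s" "X (Suc i) < Y (Suc i) \<longleftrightarrow> s"
    using letter_side[of i i] letter_side[of "Suc i" i] letter_side[of "Suc i" "Suc i"] i a
    by (simp_all add: s_def)
  have inner': "in_arc (X i) (Y i) (Y (Suc i))"
    using inner lower_nested[of i "Suc i"] i by simp
  have "in_arc (Y i) (X (Suc i)) (Y (Suc i))"
    using nested_arc_crosses[OF inner inner' side(1) side(3)] i by simp
  then have up: "in_arc (Y i) (X (Suc i)) (X (Suc (Suc i)))"
    using upper_nested[of i "Suc i"] i by simp
  have block: "min (letter_rank a) (letter_rank (inv_letter a)) \<le> rk (2 * Suc (Suc i))
      \<and> rk (2 * Suc (Suc i)) \<le> max (letter_rank a) (letter_rank (inv_letter a))"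
    using rank_in_arc[of "2 * Suc i" "Suc (2 * i)" "2 * Suc (Suc i)"] up i a in_arc_commute
      rank_X[of "Suc i"] rank_Y[of i] by simp
  have i2: "Suc (Suc i) \<le> m"
  proof (rule ccontr)
    assume "\<not> Suc (Suc i) \<le> m"
    then have "Suc i = m" using i by simp
    then have "rk (2 * Suc (Suc i)) = 2 * n + 1" using rank_X_last by (simp only:)
    then show False using block a_index by (cases a) (auto split: if_splits)
  qed
  have "w ! Suc i = a"
    using letter_in_block[of a "w ! Suc i"] block rank_X[of "Suc (Suc i)"] i2 a_index
      letter_index[of "Suc i"] reduced_at[of "Suc i"] a by auto
  then have sq': "square_at (Suc i)" using i2 a by (simp add: square_at_def)
  have "X (Suc (Suc i)) < Y (Suc i) \<longleftrightarrow> s"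
    using letter_side[of "Suc (Suc i)" "Suc i"] i2 a \<open>w ! Suc i = a\<close> by (simp add: s_def)
  then have "in_arc (X (Suc i)) (Y (Suc i)) (X (Suc (Suc i)))"
    using cooriented_shift_forward[OF up side(2) side(3)] i2 by simp
  moreover have "in_arc (X (Suc i)) (Y (Suc i)) (Y (Suc (Suc i)))"
    using calculation lower_nested[of "Suc i" "Suc (Suc i)"] i2 by simp
  ultimately show ?thesis using sq' span_less inner inner' by blast
qed

lemma square_outer:
  assumes sq: "square_at i" and outer: "\<not> in_arc (X i) (Y i) (X (Suc i))"
  shows "square_at (i - 1) \<and> span (i - 1) < span i \<and> span i < span (Suc i)"
proof -
  have i: "1 \<le> i" "i < m" using sq by (auto simp: square_at_def)
  obtain a where a: "w ! (i - 1) = a" "w ! i = a" using sq by (auto simp: square_at_def)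
  define s where "s \<longleftrightarrow> letter_rank a < letter_rank (inv_letter a)"
  have a_index: "1 \<le> fst a" using letter_index[of "i - 1"] i a by auto
  have side: "X i < Y i \<longleftrightarrow> s" "X (Suc i) < Y i \<longleftrightarrow> s"
      "X i < Y (Suc i) \<longleftrightarrow> s" "X (Suc i) < Y (Suc i) \<longleftrightarrow> s"
    using letter_side[of i i] letter_side[of "Suc i" i] letter_side[of i "Suc i"]
      letter_side[of "Suc i" "Suc i"] i a
    by (simp_all add: s_def)
  have outer': "\<not> in_arc (X i) (Y i) (Y (Suc i))"
    using outer lower_nested[of i "Suc i"] i by simp
  have encloses: "in_arc (X (Suc i)) (Y (Suc i)) (X i) \<and> in_arc (X (Suc i)) (Y (Suc i)) (Y i)
      \<and> in_arc (Y i) (X (Suc i)) (X i)"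
    using outside_arc_encloses[OF outer outer' side] i by simp
  have i_pred: "Suc (i - 1) = i" using i by simp
  have up: "in_arc (Y i) (X (Suc i)) (Y (i - 1))"
    using encloses upper_nested[of i "i - 1"] i unfolding i_pred by simp
  have block: "min (letter_rank (inv_letter a)) (letter_rank a) \<le> rk (Suc (2 * (i - 1)))
      \<and> rk (Suc (2 * (i - 1))) \<le> max (letter_rank (inv_letter a)) (letter_rank a)"
    using rank_in_arc[of "Suc (2 * i)" "2 * Suc i" "Suc (2 * (i - 1))"] up i a
      rank_X[of "Suc i"] rank_Y[of i] by simp
  have i2: "2 \<le> i"
  proof (rule ccontr)
    assume "\<not> 2 \<le> i"
    then have "rk (Suc (2 * (i - 1))) = 0" using i rank_Y_first by simp
    then show False using block a_index by (cases a) (auto split: if_splits)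
  qed
  have rank_prev: "rk (Suc (2 * (i - 1))) = letter_rank (inv_letter (w ! (i - 2)))"
    using rank_Y[of "i - 1"] i i2 by (simp add: numeral_2_eq_2)
  have i_prev: "1 \<le> i - 1" "i - 1 < m" using i i2 by auto
  then have "inv_letter (w ! (i - 2)) \<noteq> a"
    using reduced_at[of "i - 1"] a by (auto simp: numeral_2_eq_2)
  then have "inv_letter (w ! (i - 2)) = inv_letter a"
    using letter_in_block[of "inv_letter a" "inv_letter (w ! (i - 2))"] block rank_prev
      i a_index letter_index[of "i - 2"] by simp
  then have prev: "w ! (i - 2) = a" by (metis inv_letter_inv_letter)
  then have sq': "square_at (i - 1)" using i_prev a by (simp add: square_at_def numeral_2_eq_2)
  have "X i < Y (i - 1) \<longleftrightarrow> s"
    using letter_side[of i "i - 1"] i i2 a prev by (simp add: s_def numeral_2_eq_2)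
  then have "in_arc (X i) (Y i) (Y (i - 1))"
    using cooriented_shift_backward[OF up _ side(1) side(2)] i i2 by simp
  moreover have "in_arc (X i) (Y i) (X (i - 1))"
    using calculation lower_nested[of i "i - 1"] i i2 by simp
  ultimately show ?thesis using sq' span_less encloses by blast
qed

definition square_size :: "nat \<Rightarrow> nat" where
  "square_size i = min (span i) (span (Suc i))"

lemma square_descent: "square_at i \<Longrightarrow> \<exists>i'. square_at i' \<and> square_size i' < square_size i"
proof -
  assume sq: "square_at i"
  show ?thesis
  proof (cases "in_arc (X i) (Y i) (X (Suc i))")
    case True
    then have "square_at (Suc i) \<and> square_size (Suc i) < square_size i"
      using square_inner[OF sq] by (auto simp: square_size_def)
    then show ?thesis by blast
  next
    case False
    have "Suc (i - 1) = i" using sq by (simp add: square_at_def)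
    then have "square_at (i - 1) \<and> square_size (i - 1) < square_size i"
      using square_outer[OF sq False] by (auto simp: square_size_def)
    then show ?thesis by blast
  qed
qed

lemma no_square: "\<not> square_at i"
proof (induction "square_size i" arbitrary: i rule: less_induct)
  case less
  then show ?case using square_descent by blast
qed

theorem squarefree: "squarefree_word w"
  unfolding squarefree_word_def
proof (intro allI impI)
  fix i assume "Suc i < m"
  then show "w ! i \<noteq> w ! Suc i" using no_square[of "Suc i"] by (auto simp: square_at_def)
qed

lemma squarefree_at: "1 \<le> i \<Longrightarrow> i < m \<Longrightarrow> w ! i \<noteq> w ! (i - 1)"
  using no_square[of i] by (simp add: square_at_def)

(* Suppose w starts with t_1 ... t_(k-1) tbar_k.  Then abar_k = t_k lies between
   abar_(k-1) and a_k; following the upper arcs, this forces the word to continue with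
   tbar_(k-1), tbar_(k-2), ... and eventually with a letter of index 0. *)
context
  fixes k :: nat
  assumes k: "1 \<le> k" "k \<le> m"
    and prefix_t: "\<And>i. 1 \<le> i \<Longrightarrow> i < k \<Longrightarrow> w ! (i - 1) = (i, True)"
    and prefix_tbar: "w ! (k - 1) = (k, False)"
begin

lemma t_prefix_k_le_n: "k \<le> n"
  using letter_index[of "k - 1"] k prefix_tbar by simp

lemma rank_Y_t_prefix: "j < k \<Longrightarrow> rk (Suc (2 * j)) = 2 * j"
  using rank_Y_first rank_Y[of j] prefix_t[of j] k by (cases "j = 0") auto

lemma rank_X_t_prefix: "1 \<le> j \<Longrightarrow> j < k \<Longrightarrow> rk (2 * j) = 2 * j - 1"
  using rank_X[of j] prefix_t[of j] k by simp

lemma rank_X_tbar_k: "rk (2 * k) = 2 * k"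
  using rank_X[of k] prefix_tbar k by simp

(* If a_s = tbar_(j+1) has its inverse strictly between abar_j and a_(j+1), then the upper arc
   {abar_j, a_(j+1)} forces a_(s+1) = tbar_j, and abar_(s+1) lands strictly between abar_(j-1)
   and a_j: the configuration repeats one step down. *)
lemma tbar_chain_step:
  assumes j: "Suc j \<le> k" and s: "k \<le> s" "s \<le> m" and ws: "w ! (s - 1) = (Suc j, False)"
    and left: "Y j < Y s" and right: "Y s < X (Suc j)"
  shows "s < m \<and> w ! s = (j, False) \<and> 1 \<le> j \<and> Y (j - 1) < Y (Suc s) \<and> Y (Suc s) < X j"
proof -
  have "in_arc (Y j) (X (Suc j)) (Y s)" using left right by (simp add: in_arc_def)
  then have "in_arc (Y j) (X (Suc j)) (X (Suc s))"
    using upper_nested[of j s] j s k by simp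
  then have next_pos: "Y j < X (Suc s)" "X (Suc s) < X (Suc j)"
    using left right by (auto simp: in_arc_def)
  have rank_lower: "2 * j \<le> rk (2 * Suc s)"
    using rank_le_if_pos_less[of "Suc (2 * j)" "2 * Suc s"] next_pos rank_Y_t_prefix[of j] j s k
    by simp
  have "rk (2 * Suc j) \<le> 2 * Suc j"
    using rank_X_t_prefix[of "Suc j"] rank_X_tbar_k j by (cases "Suc j = k") auto
  then have rank_upper: "rk (2 * Suc s) \<le> 2 * Suc j"
    using rank_le_if_pos_less[of "2 * Suc s" "2 * Suc j"] next_pos j s k by simp
  have sm: "s < m"
  proof (rule ccontr)
    assume "\<not> s < m"
    then have "rk (2 * Suc s) = 2 * n + 1" using s rank_X_last by simp
    then show False using rank_upper j t_prefix_k_le_n by simp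
  qed
  have ws_next: "w ! s = (j, False) \<and> 1 \<le> j"
    using letter_after_tbar[of "w ! s" j] rank_lower rank_upper rank_X[of "Suc s"]
      letter_index[of s] reduced_at[of s] squarefree_at[of s] ws s k sm by simp
  then have ranks: "rk (2 * Suc s) = 2 * j" "rk (Suc (2 * Suc s)) = 2 * j - 1"
      "rk (2 * j) = 2 * j - 1" "rk (Suc (2 * j)) = 2 * j"
    using rank_X[of "Suc s"] rank_Y[of "Suc s"] rank_X_t_prefix[of j] rank_Y_t_prefix[of j] sm j
    by auto
  have "X j < Y j"
    using pos_less_if_rank_less[of "2 * j" "Suc (2 * j)"] ranks ws_next j k by simp
  then have "\<not> in_arc (X j) (Y j) (X (Suc s))" using next_pos by (simp add: in_arc_def)
  then have "\<not> in_arc (X j) (Y j) (Y (Suc s))"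
    using lower_nested[of j "Suc s"] ws_next j s sm by simp
  moreover have "Y (Suc s) < Y j"
    using pos_less_if_rank_less[of "Suc (2 * Suc s)" "Suc (2 * j)"] ranks ws_next j k sm by simp
  moreover have "Y (Suc s) \<noteq> X j" using ws_next j sm k by simp presburger
  ultimately have "Y (Suc s) < X j" using \<open>X j < Y j\<close> by (auto simp: in_arc_def)
  moreover have "Y (j - 1) < Y (Suc s)"
    using pos_less_if_rank_less[of "Suc (2 * (j - 1))" "Suc (2 * Suc s)"] ranks
      rank_Y_t_prefix[of "j - 1"] ws_next j k sm by auto
  ultimately show ?thesis using sm ws_next by blast
qed

(* Iterating the step down to j = 0 yields a letter of index 0, which is impossible. *)
lemma no_tbar_chain:
  "j \<le> k \<Longrightarrow> k \<le> s \<Longrightarrow> s \<le> m \<Longrightarrow> w ! (s - 1) = (j, False)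
    \<Longrightarrow> Y (j - 1) < Y s \<Longrightarrow> Y s < X j \<Longrightarrow> False"
proof (induction j arbitrary: s)
  case 0
  then have "s - 1 < m" using k by simp
  then show ?case using letter_index[of "s - 1"] 0 by simp
next
  case (Suc j)
  then have "s < m \<and> w ! s = (j, False) \<and> 1 \<le> j \<and> Y (j - 1) < Y (Suc s) \<and> Y (Suc s) < X j"
    using tbar_chain_step by simp
  then show ?case using Suc.IH[of "Suc s"] Suc.prems by simp
qed

(* The configuration starts at s = j = k, since abar_(k-1) < abar_k = t_k < a_k = tbar_k. *)
lemma prefix_t_tbar_impossible: False
proof -
  have "rk (Suc (2 * (k - 1))) = 2 * k - 2" "rk (Suc (2 * k)) = 2 * k - 1"
    using rank_Y_t_prefix[of "k - 1"] rank_Y[of k] prefix_tbar k by auto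
  then have "Y (k - 1) < Y k" "Y k < X k"
    using pos_less_if_rank_less[of "Suc (2 * (k - 1))" "Suc (2 * k)"]
      pos_less_if_rank_less[of "Suc (2 * k)" "2 * k"] rank_X_tbar_k k by auto
  then show False using no_tbar_chain[of k k] prefix_tbar k by simp
qed

end

(* Part (ii).  Suppose w starts with tbar_n ... tbar_(k+1) t_k, where n = k + q.  Following the
   upper arcs, the word must continue with t_(k+1), ..., t_n and then end. *)
context
  fixes k q :: nat
  assumes k: "1 \<le> k" and n_eq: "n = k + q" and q: "q < m"
    and prefix_tbar: "\<And>i. 1 \<le> i \<Longrightarrow> i \<le> q \<Longrightarrow> w ! (i - 1) = (n + 1 - i, False)"
    and prefix_t: "w ! q = (k, True)"
begin

lemma rank_X_tbar_prefix: "1 \<le> i \<Longrightarrow> i \<le> q \<Longrightarrow> rk (2 * i) = 2 * (n + 1 - i)"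
  using rank_X[of i] prefix_tbar[of i] q by simp

lemma rank_Y_tbar_prefix: "1 \<le> i \<Longrightarrow> i \<le> q \<Longrightarrow> rk (Suc (2 * i)) = 2 * (n + 1 - i) - 1"
  using rank_Y[of i] prefix_tbar[of i] q by simp

lemma rank_X_centre: "rk (2 * Suc q) = 2 * k - 1"
  using rank_X[of "Suc q"] prefix_t q by simp

lemma rank_Y_centre: "rk (Suc (2 * Suc q)) = 2 * k"
  using rank_Y[of "Suc q"] prefix_t q by simp

lemma t_chain_step:
  assumes i: "1 \<le> i" "i \<le> q" and j: "j + i = n" and s: "q < s" "s \<le> m"
    and ws: "w ! (s - 1) = (j, True)" and left: "X (Suc i) < Y s" and right: "Y s < Y i"
  shows "s < m \<and> w ! s = (Suc j, True) \<and> X i < Y (Suc s) \<and> (2 \<le> i \<longrightarrow> Y (Suc s) < Y (i - 1))"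
proof -
  have "in_arc (Y i) (X (Suc i)) (Y s)" using left right by (simp add: in_arc_def)
  then have "in_arc (Y i) (X (Suc i)) (X (Suc s))"
    using upper_nested[of i s] i s q by simp
  then have next_pos: "X (Suc i) < X (Suc s)" "X (Suc s) < Y i"
    using left right by (auto simp: in_arc_def)
  have "2 * j - 1 \<le> rk (2 * Suc i)"
    using rank_X_centre rank_X_tbar_prefix[of "Suc i"] i j n_eq by (cases "i = q") auto
  then have rank_lower: "2 * j - 1 \<le> rk (2 * Suc s)"
    using rank_le_if_pos_less[of "2 * Suc i" "2 * Suc s"] next_pos i s q by simp
  have rank_Yi: "rk (Suc (2 * i)) = 2 * j + 1" using rank_Y_tbar_prefix[of i] i j by simp
  then have rank_upper: "rk (2 * Suc s) \<le> 2 * j + 1"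
    using rank_le_if_pos_less[of "2 * Suc s" "Suc (2 * i)"] next_pos i s q by simp
  have sm: "s < m"
  proof (rule ccontr)
    assume "\<not> s < m"
    then have "rk (2 * Suc s) = 2 * n + 1" using s rank_X_last by simp
    then show False using rank_upper i j by simp
  qed
  have ws_next: "w ! s = (Suc j, True)"
    using letter_after_t[of "w ! s" j] rank_lower rank_upper rank_X[of "Suc s"]
      letter_index[of s] reduced_at[of s] squarefree_at[of s] ws s sm by simp
  then have ranks: "rk (2 * Suc s) = 2 * j + 1" "rk (Suc (2 * Suc s)) = 2 * j + 2"
      "rk (2 * i) = 2 * j + 2"
    using rank_X[of "Suc s"] rank_Y[of "Suc s"] rank_X_tbar_prefix[of i] sm i j by auto
  have "Y i < X i"
    using pos_less_if_rank_less[of "Suc (2 * i)" "2 * i"] ranks rank_Yi i q by simp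
  then have "\<not> in_arc (X i) (Y i) (X (Suc s))" using next_pos by (simp add: in_arc_def)
  then have "\<not> in_arc (X i) (Y i) (Y (Suc s))"
    using lower_nested[of i "Suc s"] i s sm by simp
  moreover have "Y i < Y (Suc s)"
    using pos_less_if_rank_less[of "Suc (2 * i)" "Suc (2 * Suc s)"] ranks rank_Yi i q sm by simp
  moreover have "Y (Suc s) \<noteq> X i" using i q sm by simp presburger
  ultimately have "X i < Y (Suc s)" using \<open>Y i < X i\<close> by (auto simp: in_arc_def)
  moreover have "Y (Suc s) < Y (i - 1)" if "2 \<le> i"
    using pos_less_if_rank_less[of "Suc (2 * Suc s)" "Suc (2 * (i - 1))"] ranks
      rank_Y_tbar_prefix[of "i - 1"] that i j q sm by auto
  ultimately show ?thesis using sm ws_next by blast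
qed

lemma t_chain:
  "t \<le> q \<Longrightarrow> q + 1 + t \<le> m \<and> w ! (q + t) = (k + t, True) \<and> X (Suc (q - t)) < Y (q + 1 + t)
    \<and> (t < q \<longrightarrow> Y (q + 1 + t) < Y (q - t))"
proof (induction t)
  case 0
  have "X (Suc q) < Y (Suc q)"
    using pos_less_if_rank_less[of "2 * Suc q" "Suc (2 * Suc q)"] rank_X_centre rank_Y_centre q k
    by simp
  moreover have "Y (Suc q) < Y q" if "0 < q"
    using pos_less_if_rank_less[of "Suc (2 * Suc q)" "Suc (2 * q)"] rank_Y_centre
      rank_Y_tbar_prefix[of q] that n_eq q by simp
  ultimately show ?case using q prefix_t by simp
next
  case (Suc t)
  then have IH: "q + 1 + t \<le> m" "w ! (q + t) = (k + t, True)" "X (Suc (q - t)) < Y (q + 1 + t)"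
      "Y (q + 1 + t) < Y (q - t)"
    by simp_all
  have "q - t = Suc (q - Suc t)" using Suc.prems by simp
  then show ?case
    using t_chain_step[of "q - t" "k + t" "q + 1 + t"] IH Suc.prems n_eq by auto
qed

(* The word stops after t_n: a further letter would lie to the right of a_1 and so have rank at
   least 2n-1, making it t_n or tbar_n. *)
lemma t_chain_length: "m = 2 * q + 1"
proof (rule ccontr)
  assume "m \<noteq> 2 * q + 1"
  moreover have chain: "2 * q + 1 \<le> m" "w ! (2 * q) = (n, True)" "X 1 < Y (2 * q + 1)"
    using t_chain[of q] n_eq by (simp_all add: mult_2)
  ultimately have sm: "2 * q + 1 < m" by simp
  have rank_X1: "2 * n - 1 \<le> rk 2"
    using rank_X_centre rank_X_tbar_prefix[of 1] n_eq by (cases "q = 0") auto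
  then have "Y 0 < X 1"
    using pos_less_if_rank_less[of "Suc 0" 2] rank_Y_first n_eq k sm by simp
  then have "\<not> in_arc (Y 0) (X 1) (Y (2 * q + 1))" using chain by (simp add: in_arc_def)
  then have "\<not> in_arc (Y 0) (X 1) (X (2 * q + 2))"
    using upper_nested[of 0 "2 * q + 1"] sm by simp
  moreover have "Y 0 < X (2 * q + 2)"
    using pos_less_if_rank_less[of "Suc 0" "2 * (2 * q + 2)"] rank_Y_first
      rank_X[of "2 * q + 2"] letter_index[of "2 * q + 1"] sm by (cases "w ! (2 * q + 1)") auto
  moreover have "X (2 * q + 2) \<noteq> X 1" using sm by simp
  ultimately have "X 1 < X (2 * q + 2)" by (auto simp: in_arc_def)
  then have "2 * n - 1 \<le> rk (2 * (2 * q + 2))"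
    using rank_le_if_pos_less[of 2 "2 * (2 * q + 2)"] rank_X1 sm by simp
  then show False
    using letter_near_top[of "w ! (2 * q + 1)" n] rank_X[of "2 * q + 2"] letter_index[of "2 * q + 1"]
      reduced_at[of "2 * q + 1"] squarefree_at[of "2 * q + 1"] chain sm by simp
qed

end

lemma no_t_tbar_prefix:
  assumes k: "1 \<le> k"
  shows "\<not> starts_with (map tt [1..<k] @ [tbar k]) w"
proof
  assume "starts_with (map tt [1..<k] @ [tbar k]) w"
  then obtain u where wu: "w = map tt [1..<k] @ [tbar k] @ u"
    by (auto simp: starts_with_def)
  show False
  proof (rule prefix_t_tbar_impossible)
    show "1 \<le> k" "k \<le> m" using k wu by simp_all
    show "w ! (k - 1) = (k, False)" using nth_t_run_end[OF k] wu by simp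
    show "w ! (i - 1) = (i, True)" if "1 \<le> i" "i < k" for i
      using nth_t_run[of "i - 1" k] that wu by simp
  qed
qed

lemma tbar_t_prefix_forces_word:
  assumes k: "1 \<le> k" "k \<le> n" and prefix: "starts_with (map tbar (rev [k+1..<n+1]) @ [tt k]) w"
  shows "w = map tbar (rev [k+1..<n+1]) @ [tt k] @ map tt [k+1..<n+1]"
proof -
  define q where "q = n - k"
  obtain u where wu: "w = map tbar (rev [k+1..<n+1]) @ [tt k] @ u"
    using prefix by (auto simp: starts_with_def)
  have n_eq: "n = k + q" and q: "q < m" using k wu by (simp_all add: q_def del: upt_Suc)
  have tbar_run: "w ! (i - 1) = (n + 1 - i, False)" if "1 \<le> i" "i \<le> q" for i
    using nth_tbar_run[of "i - 1" n k] that wu by (simp add: q_def del: upt_Suc)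
  have centre: "w ! q = (k, True)" using nth_tbar_run_centre[of k n] k wu by (simp add: q_def)
  note chain = t_chain[OF k(1) n_eq q tbar_run centre]
  note length = t_chain_length[OF k(1) n_eq q tbar_run centre]
  show ?thesis
  proof (rule nth_equalityI)
    show "length w = length (map tbar (rev [k+1..<n+1]) @ [tt k] @ map tt [k+1..<n+1])"
      using length n_eq by (simp del: upt_Suc)
  next
    fix x assume "x < length w"
    then have x: "x < 2 * q + 1" using length by simp
    show "w ! x = (map tbar (rev [k+1..<n+1]) @ [tt k] @ map tt [k+1..<n+1]) ! x"
    proof (cases "x < q")
      case True
      then show ?thesis using tbar_run[of "Suc x"] nth_tbar_run[of x n k] by (simp add: q_def)
    next
      case False
      define t where "t = x - q"
      have "x = q + t" "t \<le> q" using x False by (simp_all add: t_def)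
      then show ?thesis using chain[of t] nth_tbar_t_word[of k n t] k by (simp add: q_def)
    qed
  qed
qed

end

lemma planar_word_diagram:
  assumes "free_word n w" "planar_word n w"
  obtains p where "planar_diagram n w p"
proof -
  obtain M p where len: "length (whitehead w) = 2 * M"
    and perm: "bij_betw p {1..2 * M} {1..2 * M}"
    and order: "\<forall>i\<in>{1..2 * M}. \<forall>j\<in>{1..2 * M}.
                  p i < p j \<longrightarrow> sym_le n (whitehead w ! (i - 1)) (whitehead w ! (j - 1))"
    and upper: "nested_family {1..M} (\<lambda>i. (int (p (2 * i - 1)), int (p (2 * i))))"
    and lower: "nested_family {1..M - 1} (\<lambda>i. (int (p (2 * i)), int (p (2 * i + 1))))"
    using assms(2) unfolding planar_word_def planar_tuple_def by blast
  have "M = Suc (length w)" using len length_whitehead[of w] by simp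
  then have "planar_diagram n w p"
    using assms(1) perm order upper lower by unfold_locales simp_all
  then show thesis by (rule that)
qed

theorem propositionA:
  fixes n k :: nat and w :: "letter list"
  assumes "free_word n w" and "planar_word n w" and "1 \<le> k" and "k \<le> n"
  shows "squarefree_word w
    \<and> \<not> (starts_with (map tbar (rev [k+1..<n+1]) @ [tt k]) w
          \<and> w \<noteq> map tbar (rev [k+1..<n+1]) @ [tt k] @ map tt [k+1..<n+1])
    \<and> \<not> starts_with (map tt [1..<k] @ [tbar k]) w"
proof -
  obtain p where "planar_diagram n w p" using planar_word_diagram assms(1,2) by blast
  then interpret planar_diagram n w p .
  show ?thesis
    using squarefree tbar_t_prefix_forces_word[OF assms(3,4)] no_t_tbar_prefix[OF assms(3)]
    by blast
qed

end
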